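(* Consider six spin-$\frac12$ particles with Hilbert space $(\mathbb{C}^2)^{\otimes 6}$ and standard product basis. For a pair of spins $i\neq j$ let $P_{ij}$ be the operator swapping spins $i$ and $j$, and for $\alpha\in\mathbb{R}$ let $\mathrm{SWAP}_{ij}^{\alpha}=\frac{1+P_{ij}}{2}+e^{i\pi\alpha}\frac{1-P_{ij}}{2}$. For pairs $(i_1,j_1),\ldots,(i_n,j_n)$ and $\alpha_1,\ldots,\alpha_n\in\mathbb{R}$ let $$U(\alpha_1,\ldots,\alpha_n)=\mathrm{SWAP}_{i_nj_n}^{\alpha_n}\cdots\mathrm{SWAP}_{i_1j_1}^{\alpha_1}.$$ For $s\in\{0,1\}$ let $e^{(s)}_1,\ldots,e^{(s)}_4$ be the four logical two-qubit basis states lying in the total-spin-$s$ subspace (these are fixed vectors with real coefficients in the standard product basis), write $U^{(s)}_{ab}=\langle e^{(s)}_a|U|e^{(s)}_b\rangle$, and define $$d_{\rm FW}(U)=\Big[2-\tfrac14\big|U^{(0)}_{11}+U^{(0)}_{22}+U^{(0)}_{34}+U^{(0)}_{43}\big|-\tfrac14\big|U^{(1)}_{11}+U^{(1)}_{22}+U^{(1)}_{34}+U^{(1)}_{43}\big|\Big]^{1/2}.$$ Then for all $\alpha_1,\ldots,\alpha_n$, $$d_{\rm FW}(U(\alpha_1,\ldots,\alpha_n))=d_{\rm FW}(U(2-\alpha_1,\ldots,2-\alpha_n)).$$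
   Context: Exchange-only encoding: two logical qubits $A$ and $B$ are each encoded in three physical spins (spins $A1,A2,A3$ and $B1,B2,B3$). A single logical qubit in spins labeled 1,2,3 is spanned by $\ket{0}_l=(\ket{010}-\ket{100})/\sqrt2$ and $\ket{1}_l=(2\ket{001}-\ket{010}-\ket{100})/\sqrt6$ (and analogous states in other spin sectors), all having real coefficients; the two-logical-qubit basis states $e^{(s)}_a$ ($a=1,\ldots,4$, ordered as $\ket{00}_l,\ket{01}_l,\ket{10}_l,\ket{11}_l$) within the subspace of total spin $s$ of the six spins are formed from these by real Clebsch–Gordan coupling, so they have real coefficients. $d_{\rm FW}$ measures the distance of $U$ from the logical CNOT gate, allowing independent phases in the total-spin-0 and total-spin-1 sectors. *)

theory Defs
  imports "HOL-Analysis.Analysis"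
begin

text \<open>The six physical spins: A1,A2,A3 encode logical qubit A, B1,B2,B3 encode logical qubit B.\<close>
datatype spin = A1 | A2 | A3 | B1 | B2 | B3

lemma UNIV_spin: "(UNIV :: spin set) = {A1, A2, A3, B1, B2, B3}"
  using spin.exhaust by auto

instance spin :: finite
  by standard (simp add: UNIV_spin)

text \<open>Product basis configurations of the six spins: False encodes 0, True encodes 1.
  The Hilbert space (C^2)^{tensor 6} is the space of vectors indexed by configurations.\<close>
type_synonym conf = "bool ^ spin"
type_synonym state6 = "complex ^ conf"
type_synonym op6 = "complex ^ conf ^ conf"

definition swap_conf :: "spin \<Rightarrow> spin \<Rightarrow> conf \<Rightarrow> conf" where
  "swap_conf i j x = (\<chi> k. if k = i then x $ j else if k = j then x $ i else x $ k)"

definition Pswap :: "spin \<Rightarrow> spin \<Rightarrow> op6" where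
  "Pswap i j = (\<chi> x y. if y = swap_conf i j x then 1 else 0)"

definition SWAPpow :: "spin \<Rightarrow> spin \<Rightarrow> real \<Rightarrow> op6" where
  "SWAPpow i j \<alpha> = (\<chi> x y. (mat 1 + Pswap i j) $ x $ y / 2
       + exp (\<i> * complex_of_real (pi * \<alpha>)) * (mat 1 - Pswap i j) $ x $ y / 2)"

text \<open>U(alpha_1..alpha_n) = SWAP_{i_n j_n}^{alpha_n} ... SWAP_{i_1 j_1}^{alpha_1}
  (the first pair in the list acts first).\<close>
definition Ugate :: "(spin \<times> spin) list \<Rightarrow> real list \<Rightarrow> op6" where
  "Ugate ps as = foldl (\<lambda>A ((i, j), a). SWAPpow i j a ** A) (mat 1) (zip ps as)"

definition ind3 :: "bool \<times> bool \<times> bool \<Rightarrow> bool \<times> bool \<times> bool \<Rightarrow> real" where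
  "ind3 b c = (if b = c then 1 else 0)"

text \<open>Logical qubit states of three spins, in the m = +1/2 sector (qp) and the
  m = -1/2 sector (qm, obtained from qp by the total spin lowering operator, 0 -> 1).
  Argument l = False is logical 0, l = True is logical 1.\<close>
definition qp :: "bool \<Rightarrow> bool \<times> bool \<times> bool \<Rightarrow> real" where
  "qp l b = (if \<not> l then (ind3 b (False, True, False) - ind3 b (True, False, False)) / sqrt 2
             else (2 * ind3 b (False, False, True) - ind3 b (False, True, False)
                   - ind3 b (True, False, False)) / sqrt 6)"

definition qm :: "bool \<Rightarrow> bool \<times> bool \<times> bool \<Rightarrow> real" where
  "qm l b = (if \<not> l then (ind3 b (False, True, True) - ind3 b (True, False, True)) / sqrt 2
             else (ind3 b (True, False, True) + ind3 b (False, True, True)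
                   - 2 * ind3 b (True, True, False)) / sqrt 6)"

definition tensorAB :: "(bool \<times> bool \<times> bool \<Rightarrow> real) \<Rightarrow> (bool \<times> bool \<times> bool \<Rightarrow> real) \<Rightarrow> conf \<Rightarrow> real" where
  "tensorAB f g x = f (x $ A1, x $ A2, x $ A3) * g (x $ B1, x $ B2, x $ B3)"

text \<open>Two-logical-qubit basis states e^{(s)}_a, a = 1..4 ordered |00>,|01>,|10>,|11>,
  in the total-spin-s sector (s = 0 or 1, magnetic quantum number 0), obtained by
  Clebsch-Gordan coupling of the two spin-1/2 logical qubits.\<close>
definition elog :: "nat \<Rightarrow> nat \<Rightarrow> state6" where
  "elog s a = (let la = ((a - 1) div 2 = 1); lb = ((a - 1) mod 2 = 1);
                   \<sigma> = (if s = 0 then -1 else 1 :: real) in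
     (\<chi> x. complex_of_real ((tensorAB (qp la) (qm lb) x + \<sigma> * tensorAB (qm la) (qp lb) x) / sqrt 2)))"

definition braket :: "state6 \<Rightarrow> op6 \<Rightarrow> state6 \<Rightarrow> complex" where
  "braket u A v = (\<Sum>x\<in>UNIV. cnj (u $ x) * (A *v v) $ x)"

definition Ulog :: "nat \<Rightarrow> op6 \<Rightarrow> nat \<Rightarrow> nat \<Rightarrow> complex" where
  "Ulog s U a b = braket (elog s a) U (elog s b)"

definition dFW :: "op6 \<Rightarrow> real" where
  "dFW U = sqrt (2
     - cmod (Ulog 0 U 1 1 + Ulog 0 U 2 2 + Ulog 0 U 3 4 + Ulog 0 U 4 3) / 4
     - cmod (Ulog 1 U 1 1 + Ulog 1 U 2 2 + Ulog 1 U 3 4 + Ulog 1 U 4 3) / 4)"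

end

theory Submission
  imports Defs
begin

text \<open>Since exp(i pi (2 - a)) is the complex conjugate of exp(i pi a) and P_ij is a real
  matrix, SWAP_ij^(2 - a) is the entrywise conjugate of SWAP_ij^a. Entrywise conjugation
  is multiplicative, so U(2 - a_1, ..., 2 - a_n) is the conjugate of U(a_1, ..., a_n).
  The logical basis states are real, hence every matrix element U^(s)_ab is conjugated
  as well, and d_FW only involves moduli of sums of such elements.\<close>

definition matrix_cnj :: "complex^'n^'m \<Rightarrow> complex^'n^'m" where
  "matrix_cnj A = (\<chi> i j. cnj (A $ i $ j))"

lemma matrix_cnj_mult: "matrix_cnj (A ** B) = matrix_cnj A ** matrix_cnj B"
  unfolding matrix_cnj_def matrix_matrix_mult_def by (simp add: vec_eq_iff)

lemma matrix_cnj_mat: "matrix_cnj (mat c) = mat (cnj c)"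
  unfolding matrix_cnj_def mat_def by (simp add: vec_eq_iff)

lemma exp_i_pi_reflect:
  "exp (\<i> * complex_of_real (pi * (2 - a))) = cnj (exp (\<i> * complex_of_real (pi * a)))"
proof -
  have "\<i> * complex_of_real (pi * (2 - a)) = 2 * pi * \<i> + cnj (\<i> * complex_of_real (pi * a))"
    by (simp add: algebra_simps)
  then show ?thesis by (simp add: exp_add exp_cnj del: complex_cnj_mult)
qed

lemma SWAPpow_reflect: "SWAPpow i j (2 - a) = matrix_cnj (SWAPpow i j a)"
  unfolding SWAPpow_def matrix_cnj_def exp_i_pi_reflect
  by (simp add: Pswap_def mat_def if_distrib vec_eq_iff del: of_real_mult)

lemma foldl_SWAPpow_reflect:
  "foldl (\<lambda>A ((i, j), a). SWAPpow i j a ** A) (matrix_cnj M) (map (\<lambda>(p, a). (p, 2 - a)) xs)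
   = matrix_cnj (foldl (\<lambda>A ((i, j), a). SWAPpow i j a ** A) M xs)"
proof (induction xs arbitrary: M)
  case Nil
  then show ?case by simp
next
  case (Cons x xs)
  obtain i j a where x: "x = ((i, j), a)"
    by (metis prod.collapse)
  have "SWAPpow i j (2 - a) ** matrix_cnj M = matrix_cnj (SWAPpow i j a ** M)"
    by (simp add: SWAPpow_reflect matrix_cnj_mult)
  then show ?case
    using Cons.IH x by simp
qed

lemma Ugate_reflect: "Ugate ps (map (\<lambda>a. 2 - a) as) = matrix_cnj (Ugate ps as)"
  using foldl_SWAPpow_reflect[of "mat 1" "zip ps as"]
  by (simp add: Ugate_def zip_map2 matrix_cnj_mat)

lemma braket_matrix_cnj:
  assumes "\<And>x. u $ x \<in> \<real>" and "\<And>x. v $ x \<in> \<real>"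
  shows "braket u (matrix_cnj A) v = cnj (braket u A v)"
  using assms
  unfolding braket_def matrix_cnj_def matrix_vector_mult_def
  by (simp add: Reals_cnj_iff cnj_sum)

lemma elog_real: "elog s a $ x \<in> \<real>"
  unfolding elog_def Let_def by simp

lemma Ulog_matrix_cnj: "Ulog s (matrix_cnj U) a b = cnj (Ulog s U a b)"
  unfolding Ulog_def by (intro braket_matrix_cnj elog_real)

lemma dFW_matrix_cnj: "dFW (matrix_cnj U) = dFW U"
proof -
  have cmod_sum_cnj: "cmod (cnj w + cnj x + cnj y + cnj z) = cmod (w + x + y + z)" for w x y z
    by (metis complex_cnj_add complex_mod_cnj)
  show ?thesis
    unfolding dFW_def Ulog_matrix_cnj cmod_sum_cnj ..
qed

theorem mainTheorem3:
  fixes ps :: "(spin \<times> spin) list" and as :: "real list"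
  assumes "length ps = length as"
    and "\<forall>(i, j) \<in> set ps. i \<noteq> j"
  shows "dFW (Ugate ps as) = dFW (Ugate ps (map (\<lambda>a. 2 - a) as))"
  by (simp add: Ugate_reflect dFW_matrix_cnj)

end
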